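(* Let $\alpha\geq 0$ and $r_\alpha(x)=\|x\|_1-\alpha\|x\|_2$ on $\mathbb{R}^N$. Let $l:\mathbb{R}^N\to\mathbb{R}$ be differentiable with $L$-Lipschitz continuous gradient, for some $L>0$. Let $x^*$ be a global minimizer of $E(x)=r_\alpha(x)+l(x)$. Then: 1) For every $\lambda$ with $0<\lambda<1/L$, $$x^*\in\operatorname{argmin}_x\ \Big(r_\alpha(x)+\frac{1}{2\lambda}\big\|x-(x^*-\lambda\nabla l(x^* ))\big\|_2^2\Big).$$ 2) If $x^*=0$, then $\|\nabla l(0)\|_\infty\leq 1-\alpha$. Moreover, if $\alpha=1$ and $x^*=0$ then $\nabla l(0)=0$, and if $\alpha>1$ then $x^*\neq 0$. 3) If $\|x^*\|_2\geq\alpha/L$, let $\Lambda=\{i: x^*_i\neq 0\}$. Then $x^*_\Lambda$ is in the same direction as $\nabla_\Lambda l(x^* )+\operatorname{sign}(x^*_\Lambda)$, and $\|\nabla_\Lambda l(x^* )+\operatorname{sign}(x^*_\Lambda)\|_2=\alpha$. 4) If $0<\|x^*\|_2<\alpha/L$, then $x^*$ is 1-sparse (exactly one nonzero component). Moreover, $\nabla_i l(x^* )=(\alpha-1)\operatorname{sign}(x^*_i)$ for the index $i$ with $x^*_i\neq 0$, and $|\nabla_i l(x^* )|\leq\max\{0,\,1-\alpha+\|x^*\|_\infty L\}$ for every $i$ with $x^*_i=0$.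
   Context: For an index set $\Lambda$, $v_\Lambda$ denotes the subvector of $v$ with components in $\Lambda$ and $\nabla_\Lambda l$ the corresponding components of $\nabla l$; $\operatorname{sign}$ is applied componentwise. *)

theory Defs
  imports "HOL-Analysis.Analysis"
begin

definition norm1 :: "real^'n \<Rightarrow> real" where
  "norm1 x = (\<Sum>i\<in>UNIV. \<bar>x $ i\<bar>)"

definition norminf :: "real^'n \<Rightarrow> real" where
  "norminf x = Max (range (\<lambda>i. \<bar>x $ i\<bar>))"

definition r_alpha :: "real \<Rightarrow> real^'n \<Rightarrow> real" where
  "r_alpha \<alpha> x = norm1 x - \<alpha> * norm x"

end

theory Submission
  imports Defs
begin

text \<open>
  By the descent lemma, a global minimiser \<open>x\<close> of \<open>r\<^sub>\<alpha> + l\<close> satisfies the majorant inequality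
  \<open>r\<^sub>\<alpha> x \<le> r\<^sub>\<alpha> y + \<langle>\<nabla>l x, y - x\<rangle> + L/2 \<parallel>y - x\<parallel>\<^sup>2\<close> for every \<open>y\<close>. This alone gives the
  proximal characterisation, and every other claim comes from testing it with a special \<open>y\<close>.
  At \<open>x = 0\<close> one moves along a coordinate axis. Moving a single coordinate inside the support,
  where the 1-norm is linear, yields the first-order condition
  \<open>\<nabla>\<^sub>k l x + sgn x\<^sub>k = \<alpha> x\<^sub>k / \<parallel>x\<parallel>\<close>. If two coordinates are nonzero, one can move in their plane
  orthogonally to \<open>x\<close>, by a step of squared length \<open>\<tau>\<close> small enough to keep all signs and with
  the direction chosen so that the linear terms do not increase; then \<open>-\<alpha>\<parallel>\<cdot>\<parallel>\<close> decreases by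
  about \<open>\<alpha>\<tau>/(2\<parallel>x\<parallel>)\<close> while the quadratic term costs \<open>L\<tau>/2\<close>, so \<open>\<parallel>x\<parallel> \<ge> \<alpha>/L\<close>.
\<close>

lemma descent_lemma:
  fixes l :: "'a::real_inner \<Rightarrow> real" and g :: "'a \<Rightarrow> 'a"
  assumes grad: "\<And>x. (l has_derivative (\<lambda>h. g x \<bullet> h)) (at x)"
    and lips: "L-lipschitz_on UNIV g"
  shows "l (x + d) \<le> l x + g x \<bullet> d + L/2 * (norm d)\<^sup>2"
proof -
  define \<psi> where "\<psi> t = l (x + t *\<^sub>R d) - t * (g x \<bullet> d) - L/2 * t\<^sup>2 * (norm d)\<^sup>2" for t
  have \<psi>_deriv: "(\<psi> has_real_derivative (g (x + t *\<^sub>R d) \<bullet> d - g x \<bullet> d - L * t * (norm d)\<^sup>2)) (at t)"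
    for t
  proof -
    have "((\<lambda>t. x + t *\<^sub>R d) has_derivative (\<lambda>h. h *\<^sub>R d)) (at t)"
      by (auto intro!: derivative_eq_intros)
    from has_derivative_compose[OF this grad]
    have "((\<lambda>t. l (x + t *\<^sub>R d)) has_real_derivative (g (x + t *\<^sub>R d) \<bullet> d)) (at t)"
      unfolding has_field_derivative_def by (rule has_derivative_eq_rhs) (auto simp: fun_eq_iff)
    then show ?thesis
      unfolding \<psi>_def by (auto intro!: derivative_eq_intros)
  qed
  have \<psi>_deriv_nonpos: "g (x + t *\<^sub>R d) \<bullet> d - g x \<bullet> d - L * t * (norm d)\<^sup>2 \<le> 0" if "0 \<le> t" for t
  proof -
    have "g (x + t *\<^sub>R d) \<bullet> d - g x \<bullet> d \<le> norm (g (x + t *\<^sub>R d) - g x) * norm d"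
      using norm_cauchy_schwarz by (metis inner_diff_left)
    also have "\<dots> \<le> L * (t * norm d) * norm d"
      using lipschitz_onD[OF lips, of "x + t *\<^sub>R d" x] that
      by (intro mult_right_mono) (simp_all add: dist_norm)
    finally show ?thesis by (simp add: power2_eq_square algebra_simps)
  qed
  have "\<psi> 1 \<le> \<psi> 0"
  proof (rule DERIV_nonpos_imp_nonincreasing[of 0 1 \<psi>])
    show "\<exists>D. (\<psi> has_real_derivative D) (at t) \<and> D \<le> 0" if "0 \<le> t" "t \<le> 1" for t
      using \<psi>_deriv \<psi>_deriv_nonpos that by blast
  qed simp
  then show ?thesis by (simp add: \<psi>_def)
qed

lemma majorant_imp_prox_minimizer:
  fixes r :: "'a::real_inner \<Rightarrow> real"
  assumes majorant: "\<And>y. r x \<le> r y + g \<bullet> (y - x) + L/2 * (norm (y - x))\<^sup>2"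
    and s: "0 < s" "s * L \<le> 1"
  shows "r x + 1 / (2 * s) * (norm (x - (x - s *\<^sub>R g)))\<^sup>2
    \<le> r y + 1 / (2 * s) * (norm (y - (x - s *\<^sub>R g)))\<^sup>2"
proof -
  have "L/2 \<le> 1 / (2 * s)" using s by (simp add: field_simps)
  then have quad_le: "L/2 * (norm (y - x))\<^sup>2 \<le> 1 / (2 * s) * (norm (y - x))\<^sup>2"
    by (rule mult_right_mono) simp
  have "(norm (v + s *\<^sub>R g))\<^sup>2 = (norm v)\<^sup>2 + 2 * s * (g \<bullet> v) + s\<^sup>2 * (norm g)\<^sup>2" for v
    unfolding power2_norm_eq_inner
    by (simp add: inner_add_left inner_add_right inner_commute[of v g] power2_eq_square algebra_simps)
  from this[of "y - x"]
  have "1 / (2 * s) * (norm (y - (x - s *\<^sub>R g)))\<^sup>2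
      = 1 / (2 * s) * (norm (y - x))\<^sup>2 + g \<bullet> (y - x) + s/2 * (norm g)\<^sup>2"
    using s by (simp add: diff_diff_eq2 add_diff_eq field_simps power2_eq_square)
  moreover have "1 / (2 * s) * (norm (x - (x - s *\<^sub>R g)))\<^sup>2 = s/2 * (norm g)\<^sup>2"
    using s by (simp add: power_mult_distrib field_simps power2_eq_square)
  ultimately show ?thesis using majorant[of y] quad_le by simp
qed

lemma quadratic_nonneg_near_0_imp_linear_coeff_0:
  fixes a c L :: real
  assumes a: "0 < a" and L: "0 < L" and nonneg: "\<And>t. \<bar>t\<bar> \<le> a \<Longrightarrow> 0 \<le> t * c + L/2 * t\<^sup>2"
  shows "c = 0"
proof (rule ccontr)
  assume c: "c \<noteq> 0"
  define m where "m = min (1/L) (a/\<bar>c\<bar>)"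
  have m: "0 < m" "L * m \<le> 1" "m * \<bar>c\<bar> \<le> a"
    using a L c by (auto simp: m_def min_def field_simps)
  have "0 \<le> - (c\<^sup>2 * m) + L/2 * c\<^sup>2 * m\<^sup>2"
    using nonneg[of "- c * m"] m by (simp add: abs_mult power2_eq_square algebra_simps)
  moreover have "(L/2 * m) * (c\<^sup>2 * m) < 1 * (c\<^sup>2 * m)"
    using c m by (intro mult_strict_right_mono) auto
  ultimately show False by (simp add: power2_eq_square algebra_simps)
qed

lemma quadratic_nonneg_imp_abs_le:
  fixes b c L :: real
  assumes L: "0 < L" and nonneg: "\<And>t. 0 \<le> \<bar>t\<bar> * b + t * c + L/2 * t\<^sup>2"
  shows "\<bar>c\<bar> \<le> b"
proof (rule ccontr)
  assume "\<not> \<bar>c\<bar> \<le> b"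
  then have gap: "b - \<bar>c\<bar> < 0" by simp
  define t where "t = (if c \<ge> 0 then -1 else 1) * (\<bar>c\<bar> - b) / L"
  have "\<bar>t\<bar> * b + t * c = - (\<bar>c\<bar> - b)\<^sup>2 / L"
    using gap L by (cases "c \<ge> 0") (auto simp: t_def abs_mult power2_eq_square field_simps)
  moreover have "L/2 * t\<^sup>2 = (\<bar>c\<bar> - b)\<^sup>2 / (2 * L)"
    using L by (simp add: t_def power_mult_distrib power_divide power2_eq_square)
  ultimately have "\<bar>t\<bar> * b + t * c + L/2 * t\<^sup>2 = - ((\<bar>c\<bar> - b)\<^sup>2 / (2 * L))"
    using L by (simp add: field_simps)
  moreover have "0 < (\<bar>c\<bar> - b)\<^sup>2 / (2 * L)" using gap L by simp
  ultimately show False using nonneg[of t] by linarith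
qed

lemma sqrt_growth_imp_le:
  fixes \<alpha> L R \<epsilon> :: real
  assumes R: "0 \<le> R" and L: "0 < L" and \<epsilon>: "0 < \<epsilon>"
    and growth: "\<And>\<tau>. 0 < \<tau> \<Longrightarrow> \<tau> < \<epsilon> \<Longrightarrow> \<alpha> * sqrt (R\<^sup>2 + \<tau>) \<le> \<alpha> * R + L/2 * \<tau>"
  shows "\<alpha> \<le> R * L"
proof (rule ccontr)
  assume "\<not> \<alpha> \<le> R * L"
  then have gap: "R * L < \<alpha>" by simp
  then have \<alpha>: "0 < \<alpha>" using mult_nonneg_nonneg[OF R, of L] L by linarith
  define B where "B = 4 * \<alpha> * (\<alpha> - R * L) / L\<^sup>2"
  define \<tau> where "\<tau> = min \<epsilon> B / 2"
  have "0 < B" using \<alpha> gap L by (simp add: B_def)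
  then have \<tau>: "0 < \<tau>" "\<tau> < \<epsilon>" "\<tau> < B"
    using \<epsilon> by (auto simp: \<tau>_def)
  from \<tau>(3) have "L\<^sup>2 * \<tau> < 4 * \<alpha> * (\<alpha> - R * L)"
    using L by (simp add: B_def field_simps)
  define q where "q = (4 * \<alpha> * R * L + L\<^sup>2 * \<tau>) / (4 * \<alpha>\<^sup>2)"
  have "(R + L * \<tau> / (2 * \<alpha>))\<^sup>2 = R\<^sup>2 + \<tau> * q"
    using \<alpha> by (simp add: q_def power2_eq_square field_simps)
  also have "\<dots> < R\<^sup>2 + \<tau>"
  proof -
    have "q < 1" using \<open>L\<^sup>2 * \<tau> < 4 * \<alpha> * (\<alpha> - R * L)\<close> \<alpha> by (simp add: q_def field_simps power2_eq_square)
    then show ?thesis using \<tau>(1) by simp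
  qed
  finally have "R + L * \<tau> / (2 * \<alpha>) < sqrt (R\<^sup>2 + \<tau>)"
    by (rule real_less_rsqrt)
  then have "\<alpha> * (R + L * \<tau> / (2 * \<alpha>)) < \<alpha> * sqrt (R\<^sup>2 + \<tau>)"
    using \<alpha> by simp
  then have "\<alpha> * R + L/2 * \<tau> < \<alpha> * sqrt (R\<^sup>2 + \<tau>)"
    using \<alpha> by (simp add: distrib_left)
  with growth[OF \<tau>(1,2)] show False by linarith
qed

lemma abs_add_le_sgn_mult:
  fixes u v :: real
  assumes "\<bar>u\<bar> \<le> \<bar>v\<bar>"
  shows "\<bar>v + u\<bar> \<le> sgn v * (v + u)"
  using assms by (cases "v > 0"; cases "v < 0") (auto simp: sgn_if abs_if)

lemma norm1_axis: "norm1 (axis k (t::real)) = \<bar>t\<bar>"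
  unfolding norm1_def axis_def by (simp add: if_distrib cong: if_cong)

lemma norm_axis_real: "norm (axis k (t::real)) = \<bar>t\<bar>"
proof -
  have "axis k t = t *\<^sub>R axis k (1::real)" by (simp add: vec_eq_iff axis_def)
  then show ?thesis by simp
qed

text \<open>The hypothesis says that \<open>y\<close> vanishes off the support of \<open>x\<close> and has the sign of \<open>x\<close> on it.\<close>

lemma norm1_diff_le_sgn_inner:
  fixes x y :: "real^'n"
  assumes "\<And>k. \<bar>y$k\<bar> \<le> sgn (x$k) * y$k"
  shows "norm1 y - norm1 x \<le> (\<chi> k. sgn (x$k)) \<bullet> (y - x)"
proof -
  have "norm1 y \<le> (\<Sum>k\<in>UNIV. sgn (x$k) * y$k)"
    unfolding norm1_def by (rule sum_mono) (rule assms)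
  moreover have "norm1 x = (\<Sum>k\<in>UNIV. sgn (x$k) * x$k)"
    unfolding norm1_def by (simp add: abs_sgn mult.commute)
  ultimately show ?thesis
    by (simp add: inner_vec_def algebra_simps sum_subtractf)
qed

locale l1_minus_l2_prox_stationary =
  fixes \<alpha> L :: real and g x :: "real^'n"
  assumes alpha_nonneg: "0 \<le> \<alpha>" and L_pos: "0 < L"
    and majorant: "\<And>y. r_alpha \<alpha> x \<le> r_alpha \<alpha> y + g \<bullet> (y - x) + L/2 * (norm (y - x))\<^sup>2"
begin

lemma majorant_sign_preserving:
  assumes "\<And>k. \<bar>y$k\<bar> \<le> sgn (x$k) * y$k"
  shows "\<alpha> * (norm y - norm x) \<le> ((\<chi> k. sgn (x$k)) + g) \<bullet> (y - x) + L/2 * (norm (y - x))\<^sup>2"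
  using majorant[of y] norm1_diff_le_sgn_inner[of y x, OF assms]
  unfolding r_alpha_def by (simp add: inner_add_left algebra_simps)

lemma grad_coord_abs_le_at_0:
  assumes "x = 0"
  shows "\<bar>g$i\<bar> \<le> 1 - \<alpha>"
proof (rule quadratic_nonneg_imp_abs_le[OF L_pos])
  fix t :: real
  show "0 \<le> \<bar>t\<bar> * (1 - \<alpha>) + t * g$i + L/2 * t\<^sup>2"
    using majorant[of "axis i t"] assms
    by (simp add: r_alpha_def norm1_def[of 0] norm1_axis norm_axis_real inner_axis algebra_simps)
qed

lemma first_order_condition_on_support:
  assumes k: "x$k \<noteq> 0"
  shows "g$k + sgn (x$k) = \<alpha> / norm x * x$k"
proof -
  have R: "0 < norm x" using k by (auto simp: vec_eq_iff)
  define c where "c = sgn (x$k) + g$k - \<alpha> * x$k / norm x"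
  have "c = 0"
  proof (rule quadratic_nonneg_near_0_imp_linear_coeff_0[OF _ L_pos])
    show "0 < \<bar>x$k\<bar>" using k by simp
    fix t :: real assume t: "\<bar>t\<bar> \<le> \<bar>x$k\<bar>"
    define y where "y = x + axis k t"
    have "\<bar>y$i\<bar> \<le> sgn (x$i) * y$i" for i
      using t k by (cases "i = k"; cases "x$k > 0") (auto simp: y_def axis_def sgn_if abs_if)
    from majorant_sign_preserving[OF this]
    have "\<alpha> * (norm y - norm x) \<le> (sgn (x$k) + g$k) * t + L/2 * t\<^sup>2"
      by (simp add: y_def inner_axis norm_axis_real)
    moreover have "norm x + t * x$k / norm x \<le> norm y"
    proof -
      have "x \<bullet> y = (norm x)\<^sup>2 + t * x$k"
        by (simp add: y_def inner_add_right inner_axis power2_norm_eq_inner)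
      then show ?thesis using norm_cauchy_schwarz[of x y] R by (simp add: field_simps power2_eq_square)
    qed
    then have "\<alpha> * (norm x + t * x$k / norm x) \<le> \<alpha> * norm y"
      using alpha_nonneg by (rule mult_left_mono)
    ultimately show "0 \<le> t * c + L/2 * t\<^sup>2"
      by (simp add: c_def algebra_simps)
  qed
  then show ?thesis by (simp add: c_def)
qed

lemma norm_ge_if_two_nonzero_coords:
  assumes i: "x$i \<noteq> 0" and j: "x$j \<noteq> 0" and ij: "i \<noteq> j"
  shows "\<alpha> \<le> norm x * L"
proof -
  define a b where "a = x$i" and "b = x$j"
  define d where "d = axis i b - axis j a"
  define D where "D = a\<^sup>2 + b\<^sup>2"
  define c where "c = ((\<chi> k. sgn (x$k)) + g) \<bullet> d"
  define m where "m = min (\<bar>a\<bar> / \<bar>b\<bar>) (\<bar>b\<bar> / \<bar>a\<bar>)"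
  have D: "0 < D" using i by (simp add: D_def a_def add_pos_nonneg)
  have m: "0 < m" "m * \<bar>b\<bar> \<le> \<bar>a\<bar>" "m * \<bar>a\<bar> \<le> \<bar>b\<bar>"
    using i j by (auto simp: m_def a_def b_def min_def field_simps)
  have xd: "x \<bullet> d = 0" by (simp add: d_def inner_diff_right inner_axis a_def b_def)
  have dd: "d \<bullet> d = D"
    using ij by (simp add: d_def D_def inner_diff_left inner_diff_right inner_axis_axis power2_eq_square)
  show ?thesis
  proof (rule sqrt_growth_imp_le[where \<epsilon> = "m\<^sup>2 * D"])
    show "0 \<le> norm x" "0 < L" "0 < m\<^sup>2 * D" using L_pos m D by simp_all
    fix \<tau> assume \<tau>: "0 < \<tau>" "\<tau> < m\<^sup>2 * D"
    define t where "t = (if c \<ge> 0 then -1 else 1) * sqrt (\<tau> / D)"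
    define y where "y = x + t *\<^sub>R d"
    have t2: "t\<^sup>2 * D = \<tau>" using \<tau> D by (simp add: t_def power_mult_distrib)
    have tc: "t * c \<le> 0" using \<tau> D by (simp add: t_def mult_le_0_iff)
    have "sqrt (\<tau> / D) \<le> sqrt (m\<^sup>2)"
      using \<tau> D by (intro real_sqrt_le_mono) (simp add: field_simps)
    then have t_le: "\<bar>t\<bar> \<le> m" using m \<tau> D by (simp add: t_def abs_mult)
    have signs: "\<bar>y$k\<bar> \<le> sgn (x$k) * y$k" for k
    proof -
      have "\<bar>t * b\<bar> \<le> \<bar>a\<bar>" "\<bar>- (t * a)\<bar> \<le> \<bar>b\<bar>"
        using mult_right_mono[OF t_le, of "\<bar>b\<bar>"] mult_right_mono[OF t_le, of "\<bar>a\<bar>"] m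
        by (simp_all add: abs_mult)
      then show ?thesis using abs_add_le_sgn_mult[of "t * b" a] abs_add_le_sgn_mult[of "- (t * a)" b] ij
        by (auto simp: y_def d_def axis_def a_def[symmetric] b_def[symmetric] sgn_if)
    qed
    have "(norm y)\<^sup>2 = (norm x)\<^sup>2 + \<tau>"
      unfolding power2_norm_eq_inner using xd dd t2
      by (simp add: y_def inner_add_left inner_add_right inner_commute[of d x] power2_eq_square algebra_simps)
    then have "norm y = sqrt ((norm x)\<^sup>2 + \<tau>)" by (metis norm_ge_zero real_sqrt_unique)
    moreover have "(norm (y - x))\<^sup>2 = \<tau>"
      using dd t2 by (simp add: y_def power_mult_distrib power2_norm_eq_inner mult.commute)
    moreover have "((\<chi> k. sgn (x$k)) + g) \<bullet> (y - x) = t * c" by (simp add: y_def c_def)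
    ultimately show "\<alpha> * sqrt ((norm x)\<^sup>2 + \<tau>) \<le> \<alpha> * norm x + L/2 * \<tau>"
      using majorant_sign_preserving[OF signs] tc by (simp add: algebra_simps)
  qed
qed

lemma grad_coord_abs_le_off_axis:
  assumes x: "x = axis k a" and a: "a \<noteq> 0" and jk: "j \<noteq> k"
  shows "\<bar>g$j\<bar> \<le> 1 - \<alpha> + L * \<bar>a\<bar>"
proof -
  have "g$k + sgn a = \<alpha> * sgn a"
    using first_order_condition_on_support[of k] a by (simp add: x norm_axis_real sgn_if)
  then have "g$k = (\<alpha> - 1) * sgn a" by (simp add: algebra_simps)
  then have gk: "g$k * a = (\<alpha> - 1) * \<bar>a\<bar>" by (simp add: abs_sgn mult_ac)
  define s where "s = (if g$j \<ge> 0 then - \<bar>a\<bar> else \<bar>a\<bar>)"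
  have r_eq: "r_alpha \<alpha> (axis j s) = r_alpha \<alpha> x"
    by (simp add: x s_def r_alpha_def norm1_axis norm_axis_real)
  have "g \<bullet> (axis j s - x) = - \<bar>g$j\<bar> * \<bar>a\<bar> - (\<alpha> - 1) * \<bar>a\<bar>"
    by (simp add: x s_def inner_diff_right inner_axis gk[symmetric])
  moreover have "(norm (axis j s - x))\<^sup>2 = 2 * \<bar>a\<bar>\<^sup>2"
    unfolding power2_norm_eq_inner using jk
    by (simp add: x s_def inner_diff_left inner_diff_right inner_axis_axis power2_eq_square)
  ultimately have "\<bar>g$j\<bar> * \<bar>a\<bar> \<le> (1 - \<alpha> + L * \<bar>a\<bar>) * \<bar>a\<bar>"
    using majorant[of "axis j s"] r_eq by (simp add: power2_eq_square algebra_simps)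
  then show ?thesis using a by simp
qed

lemma norminf_grad_le_at_0:
  assumes "x = 0"
  shows "norminf g \<le> 1 - \<alpha>"
  unfolding norminf_def using grad_coord_abs_le_at_0[OF assms] by (intro Max.boundedI) auto

lemma grad_eq_0_at_0:
  assumes "\<alpha> = 1" and "x = 0"
  shows "g = 0"
  using grad_coord_abs_le_at_0[OF assms(2)] assms(1) by (simp add: vec_eq_iff)

lemma nonzero_if_alpha_gt_1:
  assumes "1 < \<alpha>"
  shows "x \<noteq> 0"
proof
  assume "x = 0"
  from grad_coord_abs_le_at_0[OF this] have "0 \<le> 1 - \<alpha>" by (meson abs_ge_zero order_trans)
  with assms show False by simp
qed

lemma support_direction:
  assumes "\<alpha> / L \<le> norm x"
  shows "let \<Lambda> = {i. x $ i \<noteq> 0} in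
    (\<exists>c\<ge>0. \<forall>i\<in>\<Lambda>. g $ i + sgn (x $ i) = c * x $ i) \<and> L2_set (\<lambda>i. g $ i + sgn (x $ i)) \<Lambda> = \<alpha>"
proof (cases "x = 0")
  case True
  then have "\<alpha> = 0" using assms alpha_nonneg L_pos by (simp add: divide_le_0_iff)
  with True show ?thesis by (auto intro: exI[of _ "0::real"])
next
  case False
  define \<Lambda> where "\<Lambda> = {i. x $ i \<noteq> 0}"
  have direction: "\<forall>i\<in>\<Lambda>. g $ i + sgn (x $ i) = \<alpha> / norm x * x $ i"
    using first_order_condition_on_support by (simp add: \<Lambda>_def)
  have "(\<Sum>i\<in>\<Lambda>. (x $ i)\<^sup>2) = (\<Sum>i\<in>UNIV. (x $ i)\<^sup>2)"
    by (rule sum.mono_neutral_left) (auto simp: \<Lambda>_def)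
  then have norm_on_support: "L2_set (\<lambda>i. x $ i) \<Lambda> = norm x"
    by (simp add: norm_vec_def L2_set_def)
  have "L2_set (\<lambda>i. g $ i + sgn (x $ i)) \<Lambda> = L2_set (\<lambda>i. \<alpha> / norm x * x $ i) \<Lambda>"
    using direction by (intro L2_set_cong) auto
  also have "\<dots> = \<alpha> / norm x * L2_set (\<lambda>i. x $ i) \<Lambda>"
    using alpha_nonneg by (intro L2_set_right_distrib[symmetric]) simp
  also have "\<dots> = \<alpha>" using norm_on_support False by simp
  finally have "L2_set (\<lambda>i. g $ i + sgn (x $ i)) \<Lambda> = \<alpha>" .
  moreover have "0 \<le> \<alpha> / norm x" using alpha_nonneg by simp
  ultimately show ?thesis using direction unfolding Let_def \<Lambda>_def by blast
qed

lemma one_sparse_if_small_norm: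
  assumes "0 < norm x" and small: "norm x < \<alpha> / L"
  shows "card {i. x $ i \<noteq> 0} = 1
    \<and> (\<forall>i. x $ i \<noteq> 0 \<longrightarrow> g $ i = (\<alpha> - 1) * sgn (x $ i))
    \<and> (\<forall>i. x $ i = 0 \<longrightarrow> \<bar>g $ i\<bar> \<le> max 0 (1 - \<alpha> + norminf x * L))"
proof -
  obtain k where k: "x$k \<noteq> 0" using assms(1) by (auto simp: vec_eq_iff)
  have "norm x * L < \<alpha>" using small L_pos by (simp add: field_simps)
  then have off_k: "x$i = 0" if "i \<noteq> k" for i
    using norm_ge_if_two_nonzero_coords[OF _ k that] by (meson not_le)
  then have support: "{i. x $ i \<noteq> 0} = {k}" using k by auto
  have x: "x = axis k (x$k)" using off_k by (auto simp: vec_eq_iff axis_def)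
  then have "norm x = \<bar>x$k\<bar>" by (metis norm_axis_real)
  then have gk: "g$k = (\<alpha> - 1) * sgn (x$k)"
    using first_order_condition_on_support[OF k] k by (simp add: sgn_if algebra_simps)
  have "\<bar>x$k\<bar> \<le> norminf x" unfolding norminf_def by (rule Max_ge) auto
  then have norminf_bound: "L * \<bar>x$k\<bar> \<le> norminf x * L"
    using L_pos by (simp add: mult.commute)
  show ?thesis
  proof (intro conjI allI impI)
    show "card {i. x $ i \<noteq> 0} = 1" using support by simp
    show "g $ i = (\<alpha> - 1) * sgn (x $ i)" if "x $ i \<noteq> 0" for i
      using gk off_k that by (cases "i = k") auto
    show "\<bar>g $ j\<bar> \<le> max 0 (1 - \<alpha> + norminf x * L)" if "x $ j = 0" for j
    proof -
      have "j \<noteq> k" using that k by auto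
      from grad_coord_abs_le_off_axis[OF x k this] norminf_bound show ?thesis by linarith
    qed
  qed
qed

end

theorem lemma3:
  fixes \<alpha> L :: real
    and l :: "real^'n \<Rightarrow> real"
    and gl :: "real^'n \<Rightarrow> real^'n"
    and xs :: "real^'n"
  assumes alpha: "\<alpha> \<ge> 0"
    and Lpos: "L > 0"
    and grad: "\<And>x. (l has_derivative (\<lambda>h. gl x \<bullet> h)) (at x)"
    and lips: "L-lipschitz_on UNIV gl"
    and minim: "\<And>x. r_alpha \<alpha> xs + l xs \<le> r_alpha \<alpha> x + l x"
  shows
    "(\<forall>s::real. 0 < s \<and> s < 1 / L \<longrightarrow>
        (\<forall>x. r_alpha \<alpha> xs + 1 / (2 * s) * (norm (xs - (xs - s *\<^sub>R gl xs)))\<^sup>2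
             \<le> r_alpha \<alpha> x + 1 / (2 * s) * (norm (x - (xs - s *\<^sub>R gl xs)))\<^sup>2))
   \<and> (xs = 0 \<longrightarrow> norminf (gl 0) \<le> 1 - \<alpha>)
   \<and> (\<alpha> = 1 \<and> xs = 0 \<longrightarrow> gl 0 = 0)
   \<and> (\<alpha> > 1 \<longrightarrow> xs \<noteq> 0)
   \<and> (norm xs \<ge> \<alpha> / L \<longrightarrow>
        (let \<Lambda> = {i. xs $ i \<noteq> 0} in
          (\<exists>c\<ge>0. \<forall>i\<in>\<Lambda>. gl xs $ i + sgn (xs $ i) = c * xs $ i)
          \<and> L2_set (\<lambda>i. gl xs $ i + sgn (xs $ i)) \<Lambda> = \<alpha>))
   \<and> (0 < norm xs \<and> norm xs < \<alpha> / L \<longrightarrow>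
        card {i. xs $ i \<noteq> 0} = 1
        \<and> (\<forall>i. xs $ i \<noteq> 0 \<longrightarrow> gl xs $ i = (\<alpha> - 1) * sgn (xs $ i))
        \<and> (\<forall>i. xs $ i = 0 \<longrightarrow> \<bar>gl xs $ i\<bar> \<le> max 0 (1 - \<alpha> + norminf xs * L)))"
proof -
  have majorant: "r_alpha \<alpha> xs \<le> r_alpha \<alpha> y + gl xs \<bullet> (y - xs) + L/2 * (norm (y - xs))\<^sup>2" for y
    using descent_lemma[OF grad lips, of xs "y - xs"] minim[of y] by simp
  interpret l1_minus_l2_prox_stationary \<alpha> L "gl xs" xs
    using alpha Lpos majorant by unfold_locales
  have step_size: "s * L \<le> 1" if "s < 1 / L" for s
    using that Lpos by (simp add: field_simps)
  show ?thesis
  proof (intro conjI allI impI)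
    show "r_alpha \<alpha> xs + 1 / (2 * s) * (norm (xs - (xs - s *\<^sub>R gl xs)))\<^sup>2
        \<le> r_alpha \<alpha> y + 1 / (2 * s) * (norm (y - (xs - s *\<^sub>R gl xs)))\<^sup>2"
      if "0 < s \<and> s < 1 / L" for s y
      using majorant_imp_prox_minimizer[OF majorant] step_size that by blast
  qed (use norminf_grad_le_at_0 grad_eq_0_at_0 nonzero_if_alpha_gt_1 support_direction
      one_sparse_if_small_norm in auto)
qed

end
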